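(* Let $H \in \mathbb{R}^{r \times n}_+$ be an entrywise nonnegative matrix satisfying the NC-SSC, i.e., $e - e_i \in \operatorname{cone}(H)$ for all $i \in \{1,\dots,r\}$. Then every $x \in \mathbb{R}^r$ with $e^\top x = 1$ and $H^\top x \ge 0$ (entrywise) satisfies $2 - r \le x_i \le 1$ for all $i \in \{1,\dots,r\}$.
   Context: $e \in \mathbb{R}^r$ denotes the all-ones vector and $e_i$ the $i$-th standard unit vector of $\mathbb{R}^r$. For $H \in \mathbb{R}^{r\times n}$, $\operatorname{cone}(H) = \{ Hy : y \in \mathbb{R}^n, y \ge 0\}$. The NC-SSC for $H$ means $\operatorname{cone}(ee^\top - I) \subseteq \operatorname{cone}(H)$, equivalently $e - e_i \in \operatorname{cone}(H)$ for all $i$. *)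

theory Defs
  imports "HOL-Analysis.Analysis"
begin

text \<open>Matrices H in R^{r x n} are rendered as real^'n^'r (rows indexed by 'r,
columns by 'n). cone(H) = {H y : y >= 0}.\<close>

definition mat_cone :: "real^'n^'r \<Rightarrow> (real^'r) set" where
  "mat_cone H = {H *v y | y. \<forall>j. y $ j \<ge> 0}"

definition ones :: "real^'r" where
  "ones = (\<chi> i. 1)"

definition unitv :: "'r \<Rightarrow> real^'r" where
  "unitv i = (\<chi> k. if k = i then 1 else 0)"

definition NC_SSC :: "real^'n^'r \<Rightarrow> bool" where
  "NC_SSC H \<longleftrightarrow> (\<forall>i. ones - unitv i \<in> mat_cone H)"

end

theory Submission
  imports Defs
begin

text \<open>If \<open>H\<^sup>T x \<ge> 0\<close>, then \<open>x\<close> has nonnegative inner product with every vector of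
  \<open>cone(H)\<close>. Taking the vectors \<open>e - e\<^sub>i\<close> supplied by the NC-SSC gives
  \<open>1 - x\<^sub>i = (e - e\<^sub>i)\<^sup>T x \<ge> 0\<close>; since the entries of \<open>x\<close> sum to 1 and the other
  \<open>r - 1\<close> entries are at most 1, also \<open>x\<^sub>i \<ge> 1 - (r - 1) = 2 - r\<close>.\<close>

lemma inner_ones_left: "ones \<bullet> x = (\<Sum>k\<in>UNIV. x $ k)"
  by (simp add: inner_vec_def ones_def)

lemma inner_unitv_left: "unitv i \<bullet> x = x $ i"
  by (simp add: unitv_def inner_vec_def mult_if_delta)

lemma mat_cone_inner_nonneg:
  fixes H :: "real^'n^'r"
  assumes "z \<in> mat_cone H" and "\<forall>j. (transpose H *v x) $ j \<ge> 0"
  shows "0 \<le> z \<bullet> x"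
proof -
  obtain y where z: "z = H *v y" and y: "\<forall>j. y $ j \<ge> 0"
    using assms(1) unfolding mat_cone_def by blast
  have "z \<bullet> x = x \<bullet> (H *v y)"
    by (simp add: z inner_commute)
  also have "\<dots> = (x v* H) \<bullet> y"
    by (simp add: dot_lmul_matrix)
  also have "\<dots> = (transpose H *v x) \<bullet> y"
    by simp
  also have "\<dots> \<ge> 0"
    unfolding inner_vec_def using assms(2) y by (intro sum_nonneg) simp
  finally show ?thesis .
qed

lemma NC_SSC_component_le_1:
  assumes "NC_SSC H" and "ones \<bullet> x = 1" and "\<forall>j. (transpose H *v x) $ j \<ge> 0"
  shows "x $ i \<le> 1"
proof -
  have "0 \<le> (ones - unitv i) \<bullet> x"
    using assms(1,3) unfolding NC_SSC_def by (blast intro: mat_cone_inner_nonneg)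
  also have "\<dots> = 1 - x $ i"
    using assms(2) by (simp add: inner_diff_left inner_unitv_left)
  finally show ?thesis by simp
qed

lemma sum_eq_1_le_1_lower_bound:
  fixes f :: "'a \<Rightarrow> real"
  assumes "finite A" and "i \<in> A" and "sum f A = 1" and "\<forall>k\<in>A. f k \<le> 1"
  shows "2 - real (card A) \<le> f i"
proof -
  have "1 = f i + sum f (A - {i})"
    using assms(1-3) by (simp add: sum.remove)
  also have "sum f (A - {i}) \<le> (\<Sum>k\<in>A - {i}. 1)"
    using assms(4) by (intro sum_mono) simp
  also have "\<dots> = real (card A) - 1"
  proof -
    have "card A \<ge> 1"
      using assms(1,2) by (metis One_nat_def Suc_leI card_gt_0_iff empty_iff)
    then show ?thesis
      using assms(2) by (simp add: card_Diff_singleton of_nat_diff)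
  qed
  finally show ?thesis by simp
qed

theorem lemma2:
  fixes H :: "real^'n^'r" and x :: "real^'r"
  assumes nonneg: "\<forall>i j. H $ i $ j \<ge> 0"
    and ssc: "NC_SSC H"
    and sum1: "ones \<bullet> x = 1"
    and feas: "\<forall>j. (transpose H *v x) $ j \<ge> 0"
  shows "\<forall>i. 2 - real CARD('r) \<le> x $ i \<and> x $ i \<le> 1"
proof
  fix i
  have le1: "\<forall>k. x $ k \<le> 1"
    using NC_SSC_component_le_1 [OF ssc sum1 feas] by blast
  moreover have "2 - real CARD('r) \<le> x $ i"
    using sum1 le1 by (intro sum_eq_1_le_1_lower_bound) (simp_all add: inner_ones_left)
  ultimately show "2 - real CARD('r) \<le> x $ i \<and> x $ i \<le> 1"
    by blast
qed

end
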